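(* (1) For the $A_r$ $Q$-system with initial data $R_{\alpha,0}=R_{\alpha,1}=1$ for all $\alpha\in I_r$, $$\sum_{n\ge0}R_{1,n}t^n=1+t\,\frac{P_r(t)}{P_{r+1}(t)},\qquad P_m(t)=t^{m/2}\,U_m\!\left(\tfrac1{\sqrt t}-\sqrt t\right),$$ where $U_m$ is the Chebyshev polynomial of the second kind, $U_m(2\cos\theta)=\frac{\sin(m+1)\theta}{\sin\theta}$ (each $P_m$ is a polynomial in $t$). (2) For the $A_{\infty/2}$ $Q$-system with initial data $R_{\alpha,0}=R_{\alpha,1}=1$ for all $\alpha\ge1$, $$\sum_{n\ge0}R_{1,n}t^n=\frac{3-t-\sqrt{1-6t+t^2}}{2}=1+t+2t^2+6t^3+22t^4+90t^5+\cdots,$$ i.e. $R_{1,n}$ is the large Schröder number $S_{n-1}$ for $n\ge1$.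
   Context: For $r\ge1$, $I_r=\{1,\dots,r\}$, the $A_r$ $Q$-system is the family $(R_{\alpha,n})_{0\le\alpha\le r+1,n\in\mathbb Z}$ with $R_{0,n}=R_{r+1,n}=1$ and $R_{\alpha,n+1}R_{\alpha,n-1}=R_{\alpha,n}^2+R_{\alpha+1,n}R_{\alpha-1,n}$ for $\alpha\in I_r$, $n\in\mathbb Z$, determined by the values $R_{\alpha,0},R_{\alpha,1}$. The $A_{\infty/2}$ $Q$-system is the family $(R_{\alpha,n})_{\alpha\ge0,n\in\mathbb Z}$ with $R_{0,n}=1$ and the same relation for all $\alpha\ge1$ (no upper boundary condition), determined by $R_{\alpha,0},R_{\alpha,1}$ for $\alpha\ge1$. With the stated unit initial data all values are positive rational numbers. *)

theory Defs
  imports Complex_Main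
begin

text \<open>Chebyshev polynomials of the second kind, normalised so that
  U_m(2 cos theta) = sin((m+1) theta) / sin theta, i.e.
  U_0 = 1, U_1 = x, U_(m+2) = x U_(m+1) - U_m.\<close>
fun chebU :: "nat \<Rightarrow> real \<Rightarrow> real" where
  "chebU 0 x = 1"
| "chebU (Suc 0) x = x"
| "chebU (Suc (Suc m)) x = x * chebU (Suc m) x - chebU m x"

definition P_cheb :: "nat \<Rightarrow> real \<Rightarrow> real" where
  "P_cheb m t = t powr (real m / 2) * chebU m (1 / sqrt t - sqrt t)"

definition is_Ar_Qsystem :: "nat \<Rightarrow> (nat \<Rightarrow> int \<Rightarrow> real) \<Rightarrow> bool" where
  "is_Ar_Qsystem r R \<longleftrightarrow>
     (\<forall>n. R 0 n = 1) \<and> (\<forall>n. R (r + 1) n = 1) \<and>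
     (\<forall>\<alpha>\<in>{1..r}. \<forall>n. R \<alpha> (n + 1) * R \<alpha> (n - 1) = (R \<alpha> n)^2 + R (\<alpha> + 1) n * R (\<alpha> - 1) n)"

definition is_Ainf_Qsystem :: "(nat \<Rightarrow> int \<Rightarrow> real) \<Rightarrow> bool" where
  "is_Ainf_Qsystem R \<longleftrightarrow>
     (\<forall>n. R 0 n = 1) \<and>
     (\<forall>\<alpha>\<ge>1. \<forall>n. R \<alpha> (n + 1) * R \<alpha> (n - 1) = (R \<alpha> n)^2 + R (\<alpha> + 1) n * R (\<alpha> - 1) n)"

end

theory Submission
  imports Defs "HOL-Analysis.FPS_Convergence"
begin

text \<open>
  With R_(alpha,0) = R_(alpha,1) = 1 the Q-relation determines R_(alpha,n) for n >= 0 by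
  forward recursion, and all values are positive; \<open>Qsol\<close> is this solution.

  A_r: following the conserved-quantity picture, the time-n values define a Jacobi-type
  three-term recurrence whose polynomials Q_j^(n) (\<open>jac_poly\<close>) evolve from time n to
  n+1 by a two-term "flow" (\<open>jac_poly_flow\<close>), a consequence of three algebraic
  compatibility identities that follow from the Q-relation.  The top polynomial Q_(r+2)^(n)
  is therefore conserved; at n = 0 it is the polynomial P_(r+1) of the statement, while the
  step Q_(r+1)^(n) = Q_(r+2) + t (R_(1,n+2)/R_(1,n+1)) Q_(r+1)^(n+1) telescopes into the
  formal identity (sum R_(1,n+1) t^n) * P_(r+1) = P_r (\<open>Ar_generating_fps\<close>).  Since
  P_(r+1)(0) = 1, the inverse of P_(r+1) has positive radius of convergence, which turns the
  formal identity into convergence of the series near 0.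

  A_(infinity/2): the frozen node r+1 of A_r influences R_(1,n) only from time n = r+2 on,
  so the coefficients of the A_r series stabilise to those of A_(infinity/2).  The identity
  P_(r+2) = (1-t) P_(r+1) - t P_r turns the A_r identities for r and r-1 into the quadratic
  relation S = 1 + t S + t S^2 of the large Schroeder numbers; bounding partial sums gives
  radius of convergence at least 1/6, and choosing the correct root of the quadratic gives
  the closed form.
\<close>

text \<open>The solution of a Q-system with unit initial data in which the nodes with \<open>B a\<close>
  are frozen at value 1 (the boundary nodes); the recurrence is solved forward in time.\<close>

fun Qsol :: "(nat \<Rightarrow> bool) \<Rightarrow> nat \<Rightarrow> nat \<Rightarrow> real" where
  "Qsol B a 0 = 1"
| "Qsol B a (Suc 0) = 1"
| "Qsol B a (Suc (Suc m)) = (if B a then 1 else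
     (Qsol B a (Suc m) ^ 2 + Qsol B (Suc a) (Suc m) * Qsol B (a - 1) (Suc m)) / Qsol B a m)"

text \<open>Positivity makes the forward recursion well defined.\<close>

lemma Qsol_pos: "Qsol B a m > 0"
  by (induction B a m rule: Qsol.induct) (auto intro!: divide_pos_pos add_pos_pos)

lemma Qsol_frozen: "B a \<Longrightarrow> Qsol B a m = 1"
  by (induction B a m rule: Qsol.induct) auto

lemma Qsol_rec:
  "\<not> B a \<Longrightarrow> Qsol B a (m + 2) * Qsol B a m =
     Qsol B a (m + 1) ^ 2 + Qsol B (a + 1) (m + 1) * Qsol B (a - 1) (m + 1)"
  using Qsol_pos[of B a m] by simp

declare Qsol.simps(3)[simp del]

text \<open>Both Q-systems of the theorem are instances.\<close>

lemma Qsystem_unit_data_unique: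
  fixes R :: "nat \<Rightarrow> int \<Rightarrow> real" and D B :: "nat \<Rightarrow> bool"
  assumes init: "\<And>a. D a \<Longrightarrow> R a 0 = 1 \<and> R a 1 = 1"
    and frozen: "\<And>a n. D a \<Longrightarrow> B a \<Longrightarrow> R a n = 1"
    and rel: "\<And>a n. D a \<Longrightarrow> \<not> B a \<Longrightarrow> D (a + 1) \<and> D (a - 1) \<and>
                R a (n + 1) * R a (n - 1) = (R a n)^2 + R (a + 1) n * R (a - 1) n"
    and "D a"
  shows "R a (int m) = Qsol B a m"
proof -
  have "\<forall>a. D a \<longrightarrow> R a (int m) = Qsol B a m \<and> R a (int m + 1) = Qsol B a (m + 1)"
  proof (induction m)
    case 0
    then show ?case using init by simp
  next
    case (Suc m)
    show ?case
    proof (intro allI impI conjI)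
      fix a assume a: "D a"
      show "R a (int (Suc m)) = Qsol B a (Suc m)" using Suc a by (simp add: add.commute)
      show "R a (int (Suc m) + 1) = Qsol B a (Suc m + 1)"
      proof (cases "B a")
        case True
        then show ?thesis using frozen a by (simp add: Qsol_frozen)
      next
        case False
        from rel[OF a False, of "int m + 1"]
        have "D (a + 1)" "D (a - 1)"
          and "R a (int m + 2) * R a (int m) =
               R a (int m + 1) ^ 2 + R (a + 1) (int m + 1) * R (a - 1) (int m + 1)"
          by (simp_all add: add.assoc)
        with Suc a have "R a (int m + 2) * Qsol B a m = Qsol B a (m + 2) * Qsol B a m"
          using Qsol_rec[of B a m] False by simp
        then have "R a (int m + 2) = Qsol B a (m + 2)"
          using Qsol_pos[of B a m] by simp
        then show ?thesis by (simp add: add.commute)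
      qed
    qed
  qed
  then show ?thesis using \<open>D a\<close> by blast
qed

text \<open>The A_r system: nodes 0 and r+1 (and, harmlessly, all larger ones) are frozen;
  \<open>Runit r a n\<close> is R_(a,n) for unit initial data.\<close>

definition Ar_frozen :: "nat \<Rightarrow> nat \<Rightarrow> bool" where
  "Ar_frozen r a \<longleftrightarrow> a = 0 \<or> r < a"

definition Runit :: "nat \<Rightarrow> nat \<Rightarrow> nat \<Rightarrow> real" where
  "Runit r a n = Qsol (Ar_frozen r) a n"

lemma Runit_pos: "Runit r a n > 0"
  unfolding Runit_def by (rule Qsol_pos)

lemma Runit_nonzero [simp]: "Runit r a n \<noteq> 0"
  using Runit_pos[of r a n] by simp

lemma Runit_frozen: "a = 0 \<or> r < a \<Longrightarrow> Runit r a n = 1"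
  unfolding Runit_def by (rule Qsol_frozen) (simp add: Ar_frozen_def)

lemma Runit_initial [simp]: "Runit r a 0 = 1" "Runit r a (Suc 0) = 1"
  unfolding Runit_def by simp_all

lemma Runit_rec: "1 \<le> a \<Longrightarrow> a \<le> r \<Longrightarrow>
   Runit r a (n + 2) * Runit r a n = Runit r a (n + 1) ^ 2 + Runit r (a + 1) (n + 1) * Runit r (a - 1) (n + 1)"
  unfolding Runit_def using Qsol_rec[of "Ar_frozen r" a n] by (simp add: Ar_frozen_def)

text \<open>The coefficients of the three-term recurrence at time n (\<open>jac_a\<close>, \<open>jac_b\<close>) and
  of the time evolution n to n+1 (\<open>flow_u\<close>), all ratios of Q-system values.\<close>

definition jac_a :: "nat \<Rightarrow> nat \<Rightarrow> nat \<Rightarrow> real" where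
  "jac_a r n a = Runit r a (n + 1) * Runit r (a - 1) n / (Runit r a n * Runit r (a - 1) (n + 1))"

definition jac_b :: "nat \<Rightarrow> nat \<Rightarrow> nat \<Rightarrow> real" where
  "jac_b r n a = (if a \<le> r then Runit r (a + 1) (n + 1) * Runit r (a - 1) n / (Runit r a n * Runit r a (n + 1)) else 0)"

definition flow_u :: "nat \<Rightarrow> nat \<Rightarrow> nat \<Rightarrow> real" where
  "flow_u r n a = Runit r (a - 1) (n + 1) ^ 2 / (Runit r (a - 1) n * Runit r (a - 1) (n + 2))"

text \<open>The three compatibility identities between the coefficients at times n and n+1.
  The first is a pure ratio identity; the others use the Q-relation through
  \<open>one_minus_flow_u\<close>.\<close>

lemma flow_compat_a:
  assumes "1 \<le> a"
  shows "jac_a r (n + 1) a * flow_u r n (a + 1) = flow_u r n a * jac_a r n a"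
  using assms by (simp add: jac_a_def flow_u_def field_simps power2_eq_square)

lemma one_minus_flow_u:
  assumes "2 \<le> a" "a \<le> r + 1"
  shows "1 - flow_u r n a = Runit r a (n + 1) * Runit r (a - 2) (n + 1) / (Runit r (a - 1) n * Runit r (a - 1) (n + 2))"
proof -
  have rec: "Runit r (a - 1) (n + 2) * Runit r (a - 1) n =
      Runit r (a - 1) (n + 1) ^ 2 + Runit r a (n + 1) * Runit r (a - 2) (n + 1)"
    using Runit_rec[of "a - 1" r n] assms by (simp add: numeral_2_eq_2)
  have "1 - flow_u r n a = (Runit r (a - 1) (n + 2) * Runit r (a - 1) n - Runit r (a - 1) (n + 1) ^ 2)
      / (Runit r (a - 1) n * Runit r (a - 1) (n + 2))"
    by (simp add: flow_u_def field_simps)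
  also have "Runit r (a - 1) (n + 2) * Runit r (a - 1) n - Runit r (a - 1) (n + 1) ^ 2
      = Runit r a (n + 1) * Runit r (a - 2) (n + 1)"
    using rec by linarith
  finally show ?thesis .
qed

lemma flow_compat_b:
  assumes "1 \<le> a" "a \<le> r"
  shows "jac_b r (n + 1) a * (1 - flow_u r n (a + 2)) = jac_b r n (a + 1) * (1 - flow_u r n (a + 1))"
proof (cases "a < r")
  case True
  then show ?thesis using assms
    by (simp add: jac_b_def one_minus_flow_u field_simps power2_eq_square)
next
  case False
  then have "a = r" using assms by simp
  then show ?thesis by (simp add: jac_b_def flow_u_def Runit_frozen)
qed

lemma flow_compat_mixed:
  assumes "1 \<le> a" "a \<le> r"
  shows "(1 - flow_u r n (a + 1)) * (jac_a r (n + 1) a - jac_a r n (a + 1)) + jac_b r (n + 1) a * flow_u r n (a + 2)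
       = flow_u r n a * jac_b r n a"
proof -
  have u: "flow_u r n (a + 1) = 1 - Runit r (a + 1) (n + 1) * Runit r (a - 1) (n + 1) / (Runit r a n * Runit r a (n + 2))"
    using one_minus_flow_u[of "a + 1" r n] assms by simp
  show ?thesis
    unfolding u jac_a_def jac_b_def flow_u_def[of r n a] flow_u_def[of r n "a + 2"]
    using assms by (simp add: field_simps power2_eq_square)
qed

text \<open>Abstract form of one induction step of the flow: if (A, B, C) are consecutive terms
  of a three-term recurrence and B', C' are the evolved terms, the compatibility identities
  make the evolved recurrence step agree with the evolution of the next term.\<close>

lemma three_term_transport:
  fixes A B C C' B' :: "real poly"
  assumes rec: "C = B - smult a\<^sub>2 (pCons 0 B) - smult b\<^sub>2 (pCons 0 A)"
    and C': "C' = smult u\<^sub>1 C + smult (1 - u\<^sub>1) B" and B': "B' = smult u\<^sub>2 B + smult (1 - u\<^sub>2) A"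
    and E1: "b' * (1 - u\<^sub>2) = b\<^sub>2 * (1 - u\<^sub>1)" and E2: "a' * u\<^sub>1 = u\<^sub>0 * a"
    and E3: "(1 - u\<^sub>1) * (a' - a\<^sub>2) + b' * u\<^sub>2 = u\<^sub>0 * b"
  shows "C' - smult a' (pCons 0 C') - smult b' (pCons 0 B') =
         smult u\<^sub>0 (C - smult a (pCons 0 C) - smult b (pCons 0 B)) + smult (1 - u\<^sub>0) C"
proof (rule poly_eqI)
  fix i
  show "coeff (C' - smult a' (pCons 0 C') - smult b' (pCons 0 B')) i =
        coeff (smult u\<^sub>0 (C - smult a (pCons 0 C) - smult b (pCons 0 B)) + smult (1 - u\<^sub>0) C) i"
  proof (cases i)
    case 0
    have "coeff C 0 = coeff B 0" using rec by simp
    then show ?thesis using 0 C' by (simp add: algebra_simps)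
  next
    case (Suc k)
    have c: "coeff C (Suc k) = coeff B (Suc k) - a\<^sub>2 * coeff B k - b\<^sub>2 * coeff A k"
      using rec by simp
    have "coeff (C' - smult a' (pCons 0 C') - smult b' (pCons 0 B')) i
          - coeff (smult u\<^sub>0 (C - smult a (pCons 0 C) - smult b (pCons 0 B)) + smult (1 - u\<^sub>0) C) i
        = (u\<^sub>0 * a - a' * u\<^sub>1) * coeff C k
          + (a\<^sub>2 + u\<^sub>0 * b - u\<^sub>1 * a\<^sub>2 - a' * (1 - u\<^sub>1) - b' * u\<^sub>2) * coeff B k
          + (b\<^sub>2 * (1 - u\<^sub>1) - b' * (1 - u\<^sub>2)) * coeff A k"
      using Suc C' B' by (simp add: c algebra_simps)
    also have "\<dots> = 0" using E1 E2 E3 by (simp add: algebra_simps)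
    finally show ?thesis by simp
  qed
qed

fun jac_poly :: "nat \<Rightarrow> nat \<Rightarrow> nat \<Rightarrow> real poly" where
  "jac_poly r n 0 = 0"
| "jac_poly r n (Suc 0) = 1"
| "jac_poly r n (Suc (Suc j)) = jac_poly r n (Suc j)
      - smult (jac_a r n (r + 1 - j)) (pCons 0 (jac_poly r n (Suc j)))
      - smult (jac_b r n (r + 1 - j)) (pCons 0 (jac_poly r n j))"

text \<open>At the two ends the flow is trivial, because there the Q-values are frozen.\<close>

lemma flow_u_top: "flow_u r n (r + 2) = 1"
  and flow_u_bottom: "flow_u r n 1 = 1"
  by (simp_all add: flow_u_def Runit_frozen)

lemma jac_poly_flow:
  assumes "1 \<le> j" "j \<le> r + 2"
  shows "jac_poly r (n + 1) j =
    smult (flow_u r n (r + 3 - j)) (jac_poly r n j) + smult (1 - flow_u r n (r + 3 - j)) (jac_poly r n (j - 1))"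
  using assms
proof (induction j rule: less_induct)
  case (less j)
  consider "j = 1" | "j = 2" | k where "j = k + 2" "1 \<le> k" "k \<le> r"
  proof -
    have "j = 1 \<or> j = 2 \<or> (j - 2 \<ge> 1 \<and> j - 2 \<le> r \<and> j = (j - 2) + 2)" using less.prems by linarith
    then show thesis using that by blast
  qed
  then show ?case
  proof cases
    case 1
    then show ?thesis using flow_u_top[of r n] by (simp add: numeral_3_eq_3)
  next
    case 2
    have "jac_a r (n + 1) (r + 1) = flow_u r n (r + 1) * jac_a r n (r + 1)"
      using flow_compat_a[of "r + 1" r n] flow_u_top[of r n] by simp
    then show ?thesis using 2 by (simp add: numeral_2_eq_2 numeral_3_eq_3 one_pCons algebra_simps)
  next
    case 3
    define a where "a = r + 1 - k"
    have a: "1 \<le> a" "a \<le> r" "r + 3 - j = a" using 3 by (auto simp: a_def)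
    have ih1: "jac_poly r (n + 1) (Suc k) =
        smult (flow_u r n (a + 1)) (jac_poly r n (Suc k)) + smult (1 - flow_u r n (a + 1)) (jac_poly r n k)"
      using less.IH[of "Suc k"] 3 by (simp add: a_def Suc_diff_le)
    have ih2: "jac_poly r (n + 1) k =
        smult (flow_u r n (a + 2)) (jac_poly r n k) + smult (1 - flow_u r n (a + 2)) (jac_poly r n (k - 1))"
    proof -
      have "r + 3 - k = a + 2" using 3 by (simp add: a_def)
      then show ?thesis using less.IH[of k] 3 by simp
    qed
    have rec: "jac_poly r n (Suc k) = jac_poly r n k - smult (jac_a r n (a + 1)) (pCons 0 (jac_poly r n k))
        - smult (jac_b r n (a + 1)) (pCons 0 (jac_poly r n (k - 1)))"
      using 3 by (cases k) (simp_all add: a_def Suc_diff_le)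
    have "jac_poly r (n + 1) (Suc k) - smult (jac_a r (n + 1) a) (pCons 0 (jac_poly r (n + 1) (Suc k)))
        - smult (jac_b r (n + 1) a) (pCons 0 (jac_poly r (n + 1) k)) =
        smult (flow_u r n a) (jac_poly r n (Suc k) - smult (jac_a r n a) (pCons 0 (jac_poly r n (Suc k)))
           - smult (jac_b r n a) (pCons 0 (jac_poly r n k))) + smult (1 - flow_u r n a) (jac_poly r n (Suc k))"
      using three_term_transport[OF rec ih1 ih2] flow_compat_b[OF a(1,2), of n]
        flow_compat_a[OF a(1), of r n] flow_compat_mixed[OF a(1,2), of n] by simp
    then show ?thesis using 3 a by simp
  qed
qed

text \<open>Since the flow coefficient at the bottom node is 1, Q_(r+2) is a conserved quantity.\<close>

lemma jac_poly_conserved: "jac_poly r n (r + 2) = jac_poly r 0 (r + 2)"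
proof (induction n)
  case (Suc n)
  have "jac_poly r (n + 1) (r + 2) = jac_poly r n (r + 2)"
    using jac_poly_flow[of "r + 2" r n] flow_u_bottom[of r n] by simp
  then show ?case using Suc by simp
qed simp

fun chebP :: "nat \<Rightarrow> real poly" where
  "chebP 0 = 1"
| "chebP (Suc 0) = [:1, -1:]"
| "chebP (Suc (Suc m)) = chebP (Suc m) - pCons 0 (chebP (Suc m)) - pCons 0 (chebP m)"

text \<open>At time 0 all coefficients are 1 and the recurrence produces the P_m.\<close>

lemma jac_poly_initial: "j \<le> r + 1 \<Longrightarrow> jac_poly r 0 (Suc j) = chebP j"
proof (induction j rule: chebP.induct)
  case (3 m)
  have "jac_a r 0 (r + 1 - Suc m) = 1" "jac_b r 0 (r + 1 - Suc m) = 1"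
    by (simp_all add: jac_a_def jac_b_def)
  then have "jac_poly r 0 (Suc (Suc (Suc m))) =
      jac_poly r 0 (Suc (Suc m)) - pCons 0 (jac_poly r 0 (Suc (Suc m))) - pCons 0 (jac_poly r 0 (Suc m))"
    by (subst jac_poly.simps(3)) simp
  then show ?case using 3 by (simp del: jac_poly.simps)
qed (simp_all add: jac_a_def one_pCons)

lemma jac_poly_top:
  assumes "1 \<le> r"
  shows "jac_poly r n (r + 1) = jac_poly r n (r + 2)
           + smult (Runit r 1 (n + 2) / Runit r 1 (n + 1)) (pCons 0 (jac_poly r (n + 1) (r + 1)))"
proof -
  have flow: "jac_poly r (n + 1) (r + 1) =
      smult (flow_u r n 2) (jac_poly r n (r + 1)) + smult (1 - flow_u r n 2) (jac_poly r n r)"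
    using jac_poly_flow[of "r + 1" r n] assms by simp
  have rec: "jac_poly r n (r + 2) = jac_poly r n (r + 1) - smult (jac_a r n 1) (pCons 0 (jac_poly r n (r + 1)))
        - smult (jac_b r n 1) (pCons 0 (jac_poly r n r))"
    by (simp add: numeral_2_eq_2)
  have "jac_a r n 1 = Runit r 1 (n + 2) / Runit r 1 (n + 1) * flow_u r n 2"
    by (simp add: jac_a_def flow_u_def Runit_frozen field_simps power2_eq_square)
  moreover have "jac_b r n 1 = Runit r 1 (n + 2) / Runit r 1 (n + 1) * (1 - flow_u r n 2)"
    using one_minus_flow_u[of 2 r n] assms by (simp add: jac_b_def Runit_frozen field_simps numeral_2_eq_2)
  ultimately show ?thesis unfolding flow rec
    by (simp add: smult_add_right smult_diff_right algebra_simps)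
qed

definition Ar_fps :: "nat \<Rightarrow> real fps" where
  "Ar_fps r = Abs_fps (\<lambda>i. Runit r 1 (i + 1))"

text \<open>Key formal identity: sum R_(1,n+1) t^n = P_r / P_(r+1).  The polynomials
  M_n = R_(1,n+1) Q_(r+1)^(n) satisfy M_n = R_(1,n+1) P_(r+1) + t M_(n+1), which telescopes
  coefficientwise.\<close>

lemma Ar_generating_fps:
  assumes "1 \<le> r"
  shows "Ar_fps r * fps_of_poly (chebP (r + 1)) = fps_of_poly (chebP r)"
proof -
  define M where "M n = smult (Runit r 1 (n + 1)) (jac_poly r n (r + 1))" for n
  have M_rec: "M n = smult (Runit r 1 (n + 1)) (chebP (r + 1)) + pCons 0 (M (n + 1))" for n
  proof -
    have "jac_poly r n (r + 2) = chebP (r + 1)"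
      using jac_poly_conserved[of r n] jac_poly_initial[of "r + 1" r] by simp
    then show ?thesis using jac_poly_top[OF assms, of n]
      by (simp add: M_def smult_add_right del: jac_poly.simps)
  qed
  have M_coeff: "coeff (M n) j = (\<Sum>i\<le>j. Runit r 1 (n + i + 1) * coeff (chebP (r + 1)) (j - i))" for n j
  proof (induction j arbitrary: n)
    case 0
    then show ?case by (subst M_rec) simp
  next
    case (Suc j)
    have "coeff (M n) (Suc j) = Runit r 1 (n + 1) * coeff (chebP (r + 1)) (Suc j) + coeff (M (n + 1)) j"
      by (subst M_rec) simp
    also have "\<dots> = (\<Sum>i\<le>Suc j. Runit r 1 (n + i + 1) * coeff (chebP (r + 1)) (Suc j - i))"
      unfolding Suc.IH by (subst sum.atMost_Suc_shift) simp
    finally show ?case .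
  qed
  have "M 0 = chebP r" using jac_poly_initial[of r r] by (simp add: M_def)
  then show ?thesis
    using M_coeff[of 0] by (intro fps_ext) (simp add: Ar_fps_def fps_mult_nth atLeast0AtMost)
qed

lemma fps_polynomial_ratio_sums:
  fixes C :: "real fps" and p q :: "real poly"
  assumes C: "C * fps_of_poly q = fps_of_poly p" and q0: "coeff q 0 \<noteq> 0"
  shows "\<exists>\<epsilon>>0. \<forall>t. \<bar>t\<bar> < \<epsilon> \<longrightarrow> (\<lambda>n. fps_nth C n * t ^ n) sums (poly p t / poly q t)"
proof -
  define Q where "Q = fps_of_poly q"
  have Q0: "fps_nth Q 0 \<noteq> 0" using q0 by (simp add: Q_def)
  have inv: "inverse Q * Q = 1" using Q0 by (rule inverse_mult_eq_1)
  have "C = fps_of_poly p * inverse Q"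
    using C inv by (metis Q_def mult.assoc mult.commute mult_1_right)
  then have rad: "fps_conv_radius (inverse Q) \<le> fps_conv_radius C"
    using fps_conv_radius_mult[of "fps_of_poly p" "inverse Q"] by simp
  have "fps_conv_radius (inverse Q) > 0"
    using Q0 by (intro fps_conv_radius_inverse_pos) (simp_all add: Q_def)
  then obtain \<epsilon> where \<epsilon>: "0 < \<epsilon>" "ereal \<epsilon> < fps_conv_radius (inverse Q)"
    using ereal_dense2 by (fastforce simp: zero_ereal_def)
  have "(\<lambda>n. fps_nth C n * t ^ n) sums (poly p t / poly q t)" if t: "\<bar>t\<bar> < \<epsilon>" for t
  proof -
    have "ereal (norm t) < ereal \<epsilon>" using t by simp
    then have in_inv: "ereal (norm t) < fps_conv_radius (inverse Q)" using \<epsilon>(2) by (rule less_trans)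
    then have in_C: "ereal (norm t) < fps_conv_radius C" using rad by (rule less_le_trans)
    have "eval_fps (inverse Q) t * poly q t = 1"
      using eval_fps_mult[OF in_inv, of Q] inv by (simp add: Q_def)
    then have nz: "poly q t \<noteq> 0" by auto
    have "eval_fps C t * poly q t = poly p t"
      using eval_fps_mult[OF in_C, of Q] C by (simp add: Q_def)
    then have "eval_fps C t = poly p t / poly q t" using nz by (simp add: field_simps)
    with sums_eval_fps[OF in_C] show ?thesis by simp
  qed
  with \<epsilon>(1) show ?thesis by blast
qed

lemma P_cheb_eq_chebP:
  assumes t: "t > 0"
  shows "P_cheb m t = poly (chebP m) t"
proof (induction m rule: chebP.induct)
  case 1
  show ?case using t by (simp add: P_cheb_def)
next
  case 2
  have "P_cheb 1 t = sqrt t * (1 / sqrt t - sqrt t)"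
    using t by (simp add: P_cheb_def powr_half_sqrt)
  also have "\<dots> = 1 - t" using t by (simp add: field_simps)
  finally show ?case by simp
next
  case (3 m)
  define x where "x = 1 / sqrt t - sqrt t"
  have sx: "sqrt t * x = 1 - t" using t by (simp add: x_def field_simps)
  have e1: "real (Suc (Suc m)) / 2 = 1 / 2 + real (Suc m) / 2"
   and e2: "real (Suc (Suc m)) / 2 = 1 + real m / 2" by simp_all
  have pow1: "t powr (real (Suc (Suc m)) / 2) = sqrt t * t powr (real (Suc m) / 2)"
    unfolding e1 using t by (simp only: powr_add powr_half_sqrt less_imp_le)
  have pow2: "t powr (real (Suc (Suc m)) / 2) = t * t powr (real m / 2)"
    unfolding e2 using t by (simp add: powr_add)
  have "P_cheb (Suc (Suc m)) t = t powr (real (Suc (Suc m)) / 2) * (x * chebU (Suc m) x - chebU m x)"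
    by (simp only: P_cheb_def x_def chebU.simps)
  also have "\<dots> = t powr (real (Suc (Suc m)) / 2) * x * chebU (Suc m) x
                  - t powr (real (Suc (Suc m)) / 2) * chebU m x"
    by (simp only: right_diff_distrib mult.assoc)
  also have "\<dots> = (sqrt t * t powr (real (Suc m) / 2)) * x * chebU (Suc m) x
                  - (t * t powr (real m / 2)) * chebU m x"
    by (subst pow1, subst pow2) (rule refl)
  also have "\<dots> = (sqrt t * x) * (t powr (real (Suc m) / 2) * chebU (Suc m) x)
                  - t * (t powr (real m / 2) * chebU m x)"
    by (simp only: mult_ac)
  also have "\<dots> = (1 - t) * P_cheb (Suc m) t - t * P_cheb m t"
    unfolding sx by (simp only: P_cheb_def x_def)
  also have "\<dots> = poly (chebP (Suc (Suc m))) t" using 3 by (simp add: algebra_simps)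
  finally show ?case .
qed

text \<open>P_m(0) = 1, so every P_m is invertible as a formal power series.\<close>

lemma chebP_coeff_0: "coeff (chebP m) 0 = 1"
  by (induction m rule: chebP.induct) simp_all

lemma sums_shift_coefficients:
  fixes c :: "nat \<Rightarrow> real"
  assumes "(\<lambda>n. c (Suc n) * t ^ n) sums s"
  shows "(\<lambda>n. c n * t ^ n) sums (c 0 + t * s)"
proof -
  have "(\<lambda>n. t * (c (Suc n) * t ^ n)) sums (t * s)" using assms by (rule sums_mult)
  then have "(\<lambda>n. c (Suc n) * t ^ Suc n) sums (t * s)" by (simp add: mult_ac)
  then have "(\<lambda>n. c n * t ^ n) sums (t * s + c 0 * t ^ 0)" by (subst sums_Suc_iff[symmetric])
  then show ?thesis by (simp add: add.commute)
qed

lemma Ar_unit_series: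
  assumes "1 \<le> r"
  shows "\<exists>\<epsilon>>0. \<forall>t. \<bar>t\<bar> < \<epsilon> \<longrightarrow>
           (\<lambda>n. Runit r 1 n * t ^ n) sums (1 + t * (poly (chebP r) t / poly (chebP (r + 1)) t))"
proof -
  obtain \<epsilon> where "\<epsilon> > 0" and \<epsilon>: "\<And>t. \<bar>t\<bar> < \<epsilon> \<Longrightarrow>
      (\<lambda>n. Runit r 1 (Suc n) * t ^ n) sums (poly (chebP r) t / poly (chebP (r + 1)) t)"
    using fps_polynomial_ratio_sums[OF Ar_generating_fps[OF assms]] chebP_coeff_0 by (auto simp: Ar_fps_def)
  then show ?thesis using sums_shift_coefficients[OF \<epsilon>] by auto
qed

theorem Ar_Qsystem_generating_function:
  fixes R :: "nat \<Rightarrow> int \<Rightarrow> real"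
  assumes r: "1 \<le> r" and Q: "is_Ar_Qsystem r R" and init: "\<forall>\<alpha>\<in>{1..r}. R \<alpha> 0 = 1 \<and> R \<alpha> 1 = 1"
  shows "\<exists>\<epsilon>>0. \<forall>t. 0 < t \<and> t < \<epsilon> \<longrightarrow>
           (\<lambda>n. R 1 (int n) * t ^ n) sums (1 + t * P_cheb r t / P_cheb (r + 1) t)"
proof -
  have frozen: "R a n = 1" if "a \<le> r + 1" "Ar_frozen r a" for a n
    using Q that by (auto simp: is_Ar_Qsystem_def Ar_frozen_def le_Suc_eq)
  have "R a 0 = 1 \<and> R a 1 = 1" if "a \<le> r + 1" for a
    using init frozen[OF that] that by (cases "Ar_frozen r a") (auto simp: Ar_frozen_def)
  moreover have "a + 1 \<le> r + 1 \<and> a - 1 \<le> r + 1 \<and>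
      R a (n + 1) * R a (n - 1) = (R a n)^2 + R (a + 1) n * R (a - 1) n"
    if "a \<le> r + 1" "\<not> Ar_frozen r a" for a n
    using Q that by (auto simp: is_Ar_Qsystem_def Ar_frozen_def)
  ultimately have "R 1 (int n) = Runit r 1 n" for n
    unfolding Runit_def using frozen r
    by (intro Qsystem_unit_data_unique[where D = "\<lambda>a. a \<le> r + 1"]) auto
  moreover obtain \<epsilon> where "\<epsilon> > 0" and "\<forall>t. \<bar>t\<bar> < \<epsilon> \<longrightarrow>
      (\<lambda>n. Runit r 1 n * t ^ n) sums (1 + t * (poly (chebP r) t / poly (chebP (r + 1)) t))"
    using Ar_unit_series[OF r] by blast
  ultimately show ?thesis by (intro exI[of _ \<epsilon>]) (auto simp: P_cheb_eq_chebP)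
qed

text \<open>Finite propagation speed: the frozen node r+1 of A_r influences node a only after
  time r+2-a, so before that A_r and A_(infinity/2) agree.\<close>

lemma Qsol_Ar_eq_Ainf:
  "a + m \<le> r + 2 \<Longrightarrow> Qsol (Ar_frozen r) a m = Qsol (\<lambda>a. a = 0) a m"
proof (induction m arbitrary: a rule: less_induct)
  case (less m)
  consider "m \<le> 1" | "a = 0" | k where "m = Suc (Suc k)" "a \<noteq> 0"
    using not_less_eq_eq by (cases m; cases "m - 1") auto
  then show ?case
  proof cases
    case 1
    then show ?thesis by (cases m) simp_all
  next
    case 2
    then show ?thesis by (simp add: Qsol_frozen Ar_frozen_def)
  next
    case 3
    then have "\<not> Ar_frozen r a" using less.prems by (simp add: Ar_frozen_def)
    moreover have "Qsol (Ar_frozen r) b (Suc k) = Qsol (\<lambda>a. a = 0) b (Suc k)" if "b \<le> a + 1" for b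
      using less.IH[of "Suc k" b] less.prems 3 that by simp
    moreover have "Qsol (Ar_frozen r) a k = Qsol (\<lambda>a. a = 0) a k"
      using less.IH[of k a] less.prems 3 by simp
    ultimately show ?thesis using 3 by (simp add: Qsol.simps(3))
  qed
qed

lemma fps_chebP_rec:
  "fps_of_poly (chebP (Suc (Suc m))) = (1 - fps_X) * fps_of_poly (chebP (Suc m)) - fps_X * fps_of_poly (chebP m)"
  by (simp add: fps_of_poly_diff fps_of_poly_pCons algebra_simps)

text \<open>Combining the identities for r and r-1 with the recurrence for P_m gives a
  quadratic relation between consecutive A_r series.\<close>

lemma Ar_fps_quadratic:
  assumes "2 \<le> r"
  shows "Ar_fps r * (1 - fps_X - fps_X * Ar_fps (r - 1)) = 1"
proof -
  obtain m where m: "r = Suc (Suc m)" using assms by (metis add_2_eq_Suc le_Suc_ex)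
  have top: "Ar_fps r * fps_of_poly (chebP (Suc r)) = fps_of_poly (chebP r)"
    using Ar_generating_fps[of r] assms by simp
  have below: "Ar_fps (Suc m) * fps_of_poly (chebP r) = fps_of_poly (chebP (Suc m))"
    using Ar_generating_fps[of "Suc m"] m by simp
  have nz: "fps_of_poly (chebP r) \<noteq> 0"
    using chebP_coeff_0[of r] fps_of_poly_eq_iff[of "chebP r" 0] by auto
  have "Ar_fps r * (1 - fps_X - fps_X * Ar_fps (r - 1)) * fps_of_poly (chebP r)
      = Ar_fps r * ((1 - fps_X) * fps_of_poly (chebP r) - fps_X * (Ar_fps (Suc m) * fps_of_poly (chebP r)))"
    using m by (simp add: algebra_simps)
  also have "\<dots> = Ar_fps r * fps_of_poly (chebP (Suc r))"
    unfolding below using fps_chebP_rec[of "Suc m"] m by simp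
  also have "\<dots> = 1 * fps_of_poly (chebP r)" using top by simp
  finally show ?thesis using nz by (metis mult_right_cancel)
qed

text \<open>The values R_(1,k+1) of the A_(infinity/2) system with unit data; they turn out to
  be the large Schroeder numbers.\<close>

definition schroeder :: "nat \<Rightarrow> real" where
  "schroeder k = Qsol (\<lambda>a. a = 0) 1 (k + 1)"

lemma Ar_fps_nth_schroeder: "k \<le> r \<Longrightarrow> fps_nth (Ar_fps r) k = schroeder k"
  using Qsol_Ar_eq_Ainf[of 1 "k + 1" r] by (simp add: Ar_fps_def Runit_def schroeder_def)

lemma schroeder_0: "schroeder 0 = 1"
  by (simp add: schroeder_def)

lemma schroeder_nonneg: "schroeder k \<ge> 0"
  unfolding schroeder_def using Qsol_pos less_imp_le by blast

text \<open>The large Schroeder recurrence, read off from the quadratic relation for an A_r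
  with r large enough that its coefficients up to the relevant index are stable.\<close>

lemma schroeder_rec: "schroeder (Suc k) = schroeder k + (\<Sum>i\<le>k. schroeder i * schroeder (k - i))"
proof -
  define r where "r = k + 3"
  have "fps_nth (Ar_fps r * (1 - fps_X - fps_X * Ar_fps (r - 1))) (Suc k) = fps_nth 1 (Suc k)"
    using Ar_fps_quadratic[of r] by (simp add: r_def)
  then have "fps_nth (Ar_fps r) (Suc k) - fps_nth (Ar_fps r) k - fps_nth (Ar_fps r * Ar_fps (r - 1)) k = 0"
    by (simp add: algebra_simps)
  moreover have "fps_nth (Ar_fps r * Ar_fps (r - 1)) k = (\<Sum>i\<le>k. schroeder i * schroeder (k - i))"
    by (simp add: fps_mult_nth atLeast0AtMost Ar_fps_nth_schroeder r_def)
  ultimately show ?thesis using Ar_fps_nth_schroeder[of "Suc k" r] Ar_fps_nth_schroeder[of k r]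
    by (simp add: r_def)
qed

lemma convolution_sum_le_square:
  fixes f :: "nat \<Rightarrow> real"
  assumes "\<And>i. f i \<ge> 0"
  shows "(\<Sum>k<K. \<Sum>i\<le>k. f i * f (k - i)) \<le> (\<Sum>i<K. f i) ^ 2"
proof -
  have "(\<Sum>k<K. \<Sum>i\<le>k. f i * f (k - i)) = (\<Sum>(i, j)\<in>{(i, j). i + j < K}. f i * f j)"
    by (rule sum.triangle_reindex[symmetric])
  also have "\<dots> \<le> (\<Sum>(i, j)\<in>{..<K} \<times> {..<K}. f i * f j)"
    by (rule sum_mono2) (auto simp: assms)
  also have "\<dots> = (\<Sum>i<K. f i) ^ 2"
    by (simp add: power2_eq_square sum_product sum.cartesian_product)
  finally show ?thesis .
qed

context
  fixes s :: "nat \<Rightarrow> real"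
  assumes s_0: "s 0 = 1" and s_nonneg: "\<And>k. s k \<ge> 0"
    and s_rec: "\<And>k. s (Suc k) = s k + (\<Sum>i\<le>k. s i * s (k - i))"
begin

text \<open>Partial sums stay below 2 on [0, 1/6], since 1 + 2x + 4x <= 2 there.\<close>

lemma schroeder_type_partial_sums_le:
  assumes x: "0 \<le> x" "x \<le> 1 / 6"
  shows "(\<Sum>k<K. s k * x ^ k) \<le> 2"
proof (induction K)
  case (Suc K)
  define P where "P = (\<Sum>k<K. s k * x ^ k)"
  have P: "0 \<le> P" "P \<le> 2" using Suc x s_nonneg by (auto simp: P_def intro!: sum_nonneg)
  have conv: "(\<Sum>i\<le>k. s i * s (k - i)) * x ^ k = (\<Sum>i\<le>k. (s i * x ^ i) * (s (k - i) * x ^ (k - i)))" for k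
    unfolding sum_distrib_right by (rule sum.cong) (auto simp: power_add[symmetric])
  have "(\<Sum>k<Suc K. s k * x ^ k) = s 0 * x ^ 0 + (\<Sum>k<K. s (Suc k) * x ^ Suc k)"
    by (rule sum.lessThan_Suc_shift)
  also have "\<dots> = 1 + x * P + x * (\<Sum>k<K. (\<Sum>i\<le>k. s i * s (k - i)) * x ^ k)"
    by (simp add: s_0 s_rec P_def algebra_simps sum.distrib sum_distrib_left)
  also have "\<dots> = 1 + x * P + x * (\<Sum>k<K. \<Sum>i\<le>k. (s i * x ^ i) * (s (k - i) * x ^ (k - i)))"
    by (simp only: conv)
  also have "\<dots> \<le> 1 + x * P + x * P ^ 2"
    using convolution_sum_le_square[of "\<lambda>i. s i * x ^ i" K] s_nonneg x
    by (intro add_left_mono mult_left_mono) (auto simp: P_def)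
  also have "\<dots> \<le> 1 + x * 2 + x * 2 ^ 2"
    using P x by (intro add_mono mult_left_mono power_mono) auto
  also have "\<dots> \<le> 2" using x by simp
  finally show ?case .
qed simp

lemma schroeder_type_conv_radius: "fps_conv_radius (Abs_fps s) \<ge> ereal (1 / 6)"
proof -
  have "summable (\<lambda>k. s k * (1 / 6) ^ k)"
  proof (rule bounded_imp_summable)
    show "0 \<le> s k * (1 / 6) ^ k" for k using s_nonneg[of k] by simp
    show "(\<Sum>k\<le>n. s k * (1 / 6) ^ k) \<le> 2" for n
      using schroeder_type_partial_sums_le[of "1 / 6" "Suc n"] by (simp add: lessThan_Suc_atMost)
  qed
  then show ?thesis
    using conv_radius_geI[of s "1 / 6 :: real"] by (simp add: fps_conv_radius_def)
qed

lemma schroeder_type_series: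
  assumes t: "\<bar>t\<bar> < 1 / 6"
  shows "\<exists>g. (\<lambda>k. s k * t ^ k) sums g \<and> \<bar>g\<bar> \<le> 2 \<and> g = 1 + t * (g + g * g)"
proof -
  define S where "S = Abs_fps s"
  define g where "g = eval_fps S t"
  have "ereal (norm t) < ereal (1 / 6)" using t by simp
  then have rad: "ereal (norm t) < fps_conv_radius S"
    using schroeder_type_conv_radius unfolding S_def by (rule less_le_trans)
  have gs: "(\<lambda>k. s k * t ^ k) sums g" using sums_eval_fps[OF rad] by (simp add: S_def g_def)
  have "\<bar>g\<bar> \<le> 2"
  proof -
    have sm: "summable (\<lambda>k. norm (s k * t ^ k))" using norm_summable_fps[OF rad] by (simp add: S_def)
    have "\<bar>g\<bar> \<le> (\<Sum>k. norm (s k * t ^ k))"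
      using summable_norm[OF sm] sums_unique[OF gs] by simp
    also have "\<dots> \<le> 2"
      using schroeder_type_partial_sums_le[of "\<bar>t\<bar>"] t s_nonneg
      by (intro suminf_le_const[OF sm]) (simp add: abs_mult power_abs)
    finally show ?thesis .
  qed
  moreover have "ereal (norm t) < fps_conv_radius (S * S)"
    using rad fps_conv_radius_mult[of S S] by (auto intro: less_le_trans)
  then have "(\<lambda>k. fps_nth (S * S) k * t ^ k) sums (g * g)"
    using eval_fps_mult[OF rad rad] by (metis sums_eval_fps g_def)
  with gs have "(\<lambda>k. s k * t ^ k + fps_nth (S * S) k * t ^ k) sums (g + g * g)"
    by (rule sums_add)
  then have "(\<lambda>k. s (Suc k) * t ^ k) sums (g + g * g)"
    by (simp add: s_rec S_def fps_mult_nth atLeast0AtMost algebra_simps)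
  then have "(\<lambda>k. s k * t ^ k) sums (1 + t * (g + g * g))"
    using sums_shift_coefficients s_0 by fastforce
  then have "g = 1 + t * (g + g * g)" using gs sums_unique2 by blast
  ultimately show ?thesis using gs by blast
qed

end

text \<open>Selecting the root of the Schroeder functional equation: for small t the bounded
  solution is the one with the minus sign in front of the square root.\<close>

lemma schroeder_equation_root:
  fixes t g :: real
  assumes t: "\<bar>t\<bar> < 1 / 6" and g_bound: "\<bar>g\<bar> \<le> 2" and quadratic: "g = 1 + t * (g + g * g)"
  shows "1 + t * g = (3 - t - sqrt (1 - 6 * t + t ^ 2)) / 2"
proof -
  have tgg: "t * g * g = g - t * g - 1" using quadratic by (simp add: algebra_simps)
  have "(2 * t * g - (1 - t)) ^ 2 = 4 * t * (t * g * g) - 4 * t * g * (1 - t) + (1 - t) ^ 2"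
    by (simp add: power2_eq_square algebra_simps)
  also have "\<dots> = 1 - 6 * t + t ^ 2" unfolding tgg by (simp add: power2_eq_square algebra_simps)
  finally have square: "(2 * t * g - (1 - t)) ^ 2 = 1 - 6 * t + t ^ 2" .
  have "\<bar>2 * t * g\<bar> \<le> 4 * \<bar>t\<bar>"
    using mult_right_mono[OF g_bound, of "\<bar>t\<bar>"] by (simp add: abs_mult)
  then have "2 * t * g - (1 - t) < 0" using t by linarith
  then have "sqrt (1 - 6 * t + t ^ 2) = 1 - t - 2 * t * g"
    using square by (metis abs_of_neg minus_diff_eq real_sqrt_abs)
  then show ?thesis by (simp add: field_simps)
qed

theorem Ainf_Qsystem_generating_function:
  fixes R :: "nat \<Rightarrow> int \<Rightarrow> real"
  assumes Q: "is_Ainf_Qsystem R" and init: "\<forall>\<alpha>\<ge>1. R \<alpha> 0 = 1 \<and> R \<alpha> 1 = 1"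
  shows "\<exists>\<epsilon>>0. \<forall>t. \<bar>t\<bar> < \<epsilon> \<longrightarrow>
           (\<lambda>n. R 1 (int n) * t ^ n) sums ((3 - t - sqrt (1 - 6 * t + t ^ 2)) / 2)"
proof (intro exI[of _ "1 / 6"] conjI allI impI)
  fix t :: real
  assume t: "\<bar>t\<bar> < 1 / 6"
  have frozen: "R 0 n = 1" for n using Q by (simp add: is_Ainf_Qsystem_def)
  have "R a 0 = 1 \<and> R a 1 = 1" for a using init frozen by (cases "a = 0") auto
  moreover have "R a (n + 1) * R a (n - 1) = (R a n)^2 + R (a + 1) n * R (a - 1) n" if "a \<noteq> 0" for a n
    using Q that by (simp add: is_Ainf_Qsystem_def)
  ultimately have R1_Qsol: "R 1 (int n) = Qsol (\<lambda>a. a = 0) 1 n" for n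
    using frozen by (intro Qsystem_unit_data_unique[where D = "\<lambda>_. True"]) auto
  have R1: "R 1 0 = 1" "R 1 (int (Suc k)) = schroeder k" for k
    using R1_Qsol[of 0] R1_Qsol[of "Suc k"] by (simp_all add: schroeder_def)
  obtain g where gs: "(\<lambda>k. schroeder k * t ^ k) sums g" and "\<bar>g\<bar> \<le> 2" "g = 1 + t * (g + g * g)"
    using schroeder_type_series[OF schroeder_0 schroeder_nonneg schroeder_rec t] by blast
  then have g: "1 + t * g = (3 - t - sqrt (1 - 6 * t + t ^ 2)) / 2"
    using t by (intro schroeder_equation_root)
  have "(\<lambda>n. R 1 (int (Suc n)) * t ^ n) sums g" unfolding R1(2) by (rule gs)
  then have "(\<lambda>n. R 1 (int n) * t ^ n) sums (R 1 (int 0) + t * g)"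
    by (rule sums_shift_coefficients)
  then show "(\<lambda>n. R 1 (int n) * t ^ n) sums ((3 - t - sqrt (1 - 6 * t + t ^ 2)) / 2)"
    by (simp only: R1(1) of_nat_0 g)
qed simp

theorem mainTheorem15:
  shows "(\<forall>r::nat. \<forall>R. r \<ge> 1 \<and> is_Ar_Qsystem r R \<and>
            (\<forall>\<alpha>\<in>{1..r}. R \<alpha> 0 = 1 \<and> R \<alpha> 1 = 1) \<longrightarrow>
            (\<exists>\<epsilon>>0. \<forall>t::real. 0 < t \<and> t < \<epsilon> \<longrightarrow>
               (\<lambda>n. R 1 (int n) * t ^ n) sums (1 + t * P_cheb r t / P_cheb (r + 1) t)))
     \<and> (\<forall>R. is_Ainf_Qsystem R \<and> (\<forall>\<alpha>\<ge>1. R \<alpha> 0 = 1 \<and> R \<alpha> 1 = 1) \<longrightarrow>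
            (\<exists>\<epsilon>>0. \<forall>t::real. \<bar>t\<bar> < \<epsilon> \<longrightarrow>
               (\<lambda>n. R 1 (int n) * t ^ n) sums ((3 - t - sqrt (1 - 6 * t + t^2)) / 2)))"
  using Ar_Qsystem_generating_function Ainf_Qsystem_generating_function by blast

end
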